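(* Let $X$ be a hyperbolic approximation of $Z$. Any two vertices $v,v'\in V$ can be joined by a geodesic $v=v_0,v_1,\dots,v_{n+1}=v'$ (where $n+1=|vv'|$) such that $\ell(v_i)<\max\{\ell(v_{i-1}),\ell(v_{i+1})\}$ for all $1\le i\le n$.
   Context: Hyperbolic approximation: let $(Z,d)$ be a bounded metric space with at least two points and fix $0<r\le1/6$. Let $k_0$ be the largest integer with $\operatorname{diam}Z<r^{k_0}$. For each integer $k\ge k_0$ choose a maximal $r^k$-separated subset $V_k\subset Z$. Vertex set $V=\bigsqcup_{k\ge k_0}V_k$ (disjoint union), level $\ell(v)=k$ for $v\in V_k$, ball $B(v)=\{z:d(z,v)<2r^k\}$ with closure $\overline B(v)$. Edges: $v,v'$ of equal level with $\overline B(v)\cap\overline B(v')\neq\emptyset$ (horizontal), or levels differing by one with the ball of the higher-level vertex contained in the ball of the lower-level one (radial). Path metric with unit edges, denoted $|vv'|$. A geodesic between vertices is a vertex sequence $v_0,\dots,v_N$ with consecutive vertices adjacent and $N=|v_0v_N|$. *)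

theory Defs
  imports "HOL-Analysis.Analysis"
begin

text \<open>Hyperbolic approximation of a bounded metric space Z (a subset of a metric space type,
with the induced metric). Vertices are pairs (k, z) with z in the chosen net V k at level k.\<close>

definition HA_k0 :: "'a::metric_space set \<Rightarrow> real \<Rightarrow> int" where
  "HA_k0 Z r = (GREATEST k::int. diameter Z < r powi k)"

definition separated :: "real \<Rightarrow> 'a::metric_space set \<Rightarrow> bool" where
  "separated s A \<longleftrightarrow> (\<forall>x\<in>A. \<forall>y\<in>A. x \<noteq> y \<longrightarrow> s \<le> dist x y)"

definition maximal_separated :: "'a::metric_space set \<Rightarrow> real \<Rightarrow> 'a set \<Rightarrow> bool" where
  "maximal_separated Z s A \<longleftrightarrow> A \<subseteq> Z \<and> separated s A \<and>
     (\<forall>B. A \<subseteq> B \<and> B \<subseteq> Z \<and> separated s B \<longrightarrow> B = A)"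

definition HA_verts :: "'a::metric_space set \<Rightarrow> real \<Rightarrow> (int \<Rightarrow> 'a set) \<Rightarrow> (int \<times> 'a) set" where
  "HA_verts Z r V = {(k, z). HA_k0 Z r \<le> k \<and> z \<in> V k}"

definition HA_ball :: "'a::metric_space set \<Rightarrow> real \<Rightarrow> int \<times> 'a \<Rightarrow> 'a set" where
  "HA_ball Z r v = {z \<in> Z. dist z (snd v) < 2 * r powi (fst v)}"

definition HA_cball :: "'a::metric_space set \<Rightarrow> real \<Rightarrow> int \<times> 'a \<Rightarrow> 'a set" where
  "HA_cball Z r v = Z \<inter> closure (HA_ball Z r v)"

definition HA_edge :: "'a::metric_space set \<Rightarrow> real \<Rightarrow> (int \<Rightarrow> 'a set) \<Rightarrow> int \<times> 'a \<Rightarrow> int \<times> 'a \<Rightarrow> bool" where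
  "HA_edge Z r V v w \<longleftrightarrow> v \<in> HA_verts Z r V \<and> w \<in> HA_verts Z r V \<and> v \<noteq> w \<and>
     ((fst v = fst w \<and> HA_cball Z r v \<inter> HA_cball Z r w \<noteq> {}) \<or>
      (fst w = fst v + 1 \<and> HA_ball Z r w \<subseteq> HA_ball Z r v) \<or>
      (fst v = fst w + 1 \<and> HA_ball Z r v \<subseteq> HA_ball Z r w))"

definition HA_path :: "'a::metric_space set \<Rightarrow> real \<Rightarrow> (int \<Rightarrow> 'a set) \<Rightarrow> (int \<times> 'a) list \<Rightarrow> bool" where
  "HA_path Z r V ps \<longleftrightarrow> ps \<noteq> [] \<and> set ps \<subseteq> HA_verts Z r V \<and>
     (\<forall>i. Suc i < length ps \<longrightarrow> HA_edge Z r V (ps ! i) (ps ! Suc i))"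

definition HA_dist :: "'a::metric_space set \<Rightarrow> real \<Rightarrow> (int \<Rightarrow> 'a set) \<Rightarrow> int \<times> 'a \<Rightarrow> int \<times> 'a \<Rightarrow> nat" where
  "HA_dist Z r V v w = (LEAST n. \<exists>ps. HA_path Z r V ps \<and> hd ps = v \<and> last ps = w \<and> length ps = Suc n)"

end

theory Submission
  imports Defs
begin

text \<open>Among all geodesics from \<open>v\<close> to \<open>w\<close> take one of minimal total level. If an interior
vertex \<open>b\<close> had level at least that of both neighbours \<open>a\<close> and \<open>c\<close>, then \<open>a \<noteq> c\<close> and \<open>a\<close>, \<open>c\<close>
are not adjacent, since otherwise the geodesic could be shortened. The geometry of the balls
then yields a common neighbour \<open>x\<close> of \<open>a\<close> and \<open>c\<close> with \<open>\<ell>(x) = \<ell>(b) - 1\<close>: if both \<open>a\<close> and \<open>c\<close>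
lie on the level of \<open>b\<close>, a parent of \<open>b\<close>; otherwise a parent of whichever of \<open>a\<close>, \<open>c\<close> lies on
that level. Replacing \<open>b\<close> by \<open>x\<close> gives a geodesic of smaller total level.\<close>

section \<open>Geodesics without interior peaks in graphs\<close>

definition graph_path :: "('v \<Rightarrow> 'v \<Rightarrow> bool) \<Rightarrow> 'v set \<Rightarrow> 'v list \<Rightarrow> bool" where
  "graph_path E S ps \<longleftrightarrow> ps \<noteq> [] \<and> set ps \<subseteq> S \<and> successively E ps"

definition graph_dist :: "('v \<Rightarrow> 'v \<Rightarrow> bool) \<Rightarrow> 'v set \<Rightarrow> 'v \<Rightarrow> 'v \<Rightarrow> nat" where
  "graph_dist E S v w =
     (LEAST n. \<exists>ps. graph_path E S ps \<and> hd ps = v \<and> last ps = w \<and> length ps = Suc n)"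

definition graph_geodesic :: "('v \<Rightarrow> 'v \<Rightarrow> bool) \<Rightarrow> 'v set \<Rightarrow> 'v list \<Rightarrow> bool" where
  "graph_geodesic E S ps \<longleftrightarrow> graph_path E S ps \<and> length ps = Suc (graph_dist E S (hd ps) (last ps))"

definition no_interior_peak :: "('v \<Rightarrow> int) \<Rightarrow> 'v list \<Rightarrow> bool" where
  "no_interior_peak lvl ps \<longleftrightarrow>
     (\<forall>i. 0 < i \<and> Suc i < length ps \<longrightarrow> lvl (ps ! i) < max (lvl (ps ! (i - 1))) (lvl (ps ! Suc i)))"

lemma graph_dist_le_length:
  assumes "graph_path E S ps"
  shows "Suc (graph_dist E S (hd ps) (last ps)) \<le> length ps"
proof -
  have "graph_dist E S (hd ps) (last ps) \<le> length ps - 1"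
    unfolding graph_dist_def using assms by (intro Least_le exI[of _ ps]) (auto simp: graph_path_def)
  with assms show ?thesis
    by (cases ps) (auto simp: graph_path_def)
qed

lemma graph_geodesic_exists:
  assumes "graph_path E S ps"
  obtains qs where "graph_geodesic E S qs" "hd qs = hd ps" "last qs = last ps"
proof -
  have "\<exists>n qs. graph_path E S qs \<and> hd qs = hd ps \<and> last qs = last ps \<and> length qs = Suc n"
    using assms by (intro exI[of _ "length ps - 1"] exI[of _ ps]) (auto simp: graph_path_def)
  from LeastI_ex[OF this] show thesis
    using that unfolding graph_geodesic_def graph_dist_def by auto
qed

lemma graph_path_splice:
  assumes "graph_path E S (pre @ xs @ post)" "graph_path E S ys"
    and "xs \<noteq> []" "hd ys = hd xs" "last ys = last xs"
  shows "graph_path E S (pre @ ys @ post)"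
  using assms by (auto simp: graph_path_def successively_append_iff)

lemma graph_geodesic_splice:
  assumes "graph_geodesic E S (pre @ xs @ post)" "graph_path E S ys"
    and "xs \<noteq> []" "hd ys = hd xs" "last ys = last xs"
  shows "length xs \<le> length ys"
    and "length ys = length xs \<Longrightarrow> graph_geodesic E S (pre @ ys @ post)"
proof -
  have path: "graph_path E S (pre @ ys @ post)"
    using assms graph_path_splice unfolding graph_geodesic_def by blast
  have "ys \<noteq> []"
    using assms(2) by (simp add: graph_path_def)
  with assms(3-5) have ends: "hd (pre @ ys @ post) = hd (pre @ xs @ post)"
      "last (pre @ ys @ post) = last (pre @ xs @ post)"
    by (auto simp: hd_append last_append)
  show "length xs \<le> length ys"
    using graph_dist_le_length[OF path] assms(1) unfolding ends graph_geodesic_def by simp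
  show "graph_geodesic E S (pre @ ys @ post)" if "length ys = length xs"
    using path assms(1) that unfolding graph_geodesic_def ends by simp
qed

lemma graph_path_join:
  assumes "graph_path E S xs" "graph_path E S ys" "last xs = hd ys"
  shows "graph_path E S (xs @ tl ys)" "hd (xs @ tl ys) = hd xs" "last (xs @ tl ys) = last ys"
  using assms by (cases ys; auto simp: graph_path_def successively_append_iff successively_Cons)+

lemma graph_path_rev:
  assumes "symp E" "graph_path E S ps"
  shows "graph_path E S (rev ps)"
  using assms by (auto simp: graph_path_def symp_def elim: successively_mono)

lemma nth_window_decomp:
  assumes "0 < i" "Suc i < length xs"
  shows "xs = take (i - 1) xs @ [xs ! (i - 1), xs ! i, xs ! Suc i] @ drop (Suc (Suc i)) xs"
proof -
  have "drop (i - 1) xs = [xs ! (i - 1), xs ! i, xs ! Suc i] @ drop (Suc (Suc i)) xs"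
    using assms by (simp add: Cons_nth_drop_Suc flip: Cons_nth_drop_Suc)
  then show ?thesis
    by (metis append_take_drop_id)
qed

theorem graph_geodesic_no_interior_peak:
  fixes lvl :: "'v \<Rightarrow> int"
  assumes lvl_bounded: "\<And>x. x \<in> S \<Longrightarrow> m \<le> lvl x"
    and detour: "\<And>a b c. E a b \<Longrightarrow> E b c \<Longrightarrow> lvl a \<le> lvl b \<Longrightarrow> lvl c \<le> lvl b \<Longrightarrow>
        a \<noteq> c \<Longrightarrow> \<not> E a c \<Longrightarrow> \<exists>x\<in>S. E a x \<and> E x c \<and> lvl x < lvl b"
    and "graph_path E S ps"
  obtains qs where "graph_geodesic E S qs" "hd qs = hd ps" "last qs = last ps" "no_interior_peak lvl qs"
proof -
  define weight where "weight qs = (\<Sum>x\<leftarrow>qs. nat (lvl x - m))" for qs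
  define admissible where
    "admissible qs \<longleftrightarrow> graph_geodesic E S qs \<and> hd qs = hd ps \<and> last qs = last ps" for qs
  obtain g where "admissible g"
    using graph_geodesic_exists[OF \<open>graph_path E S ps\<close>] unfolding admissible_def by metis
  then obtain qs where adm: "admissible qs"
    and least: "\<And>qs'. admissible qs' \<Longrightarrow> weight qs \<le> weight qs'"
    using ex_has_least_nat[of admissible g weight] by blast
  have "no_interior_peak lvl qs"
    unfolding no_interior_peak_def
  proof (intro allI impI, rule ccontr)
    fix i assume i: "0 < i \<and> Suc i < length qs"
      and peak: "\<not> lvl (qs ! i) < max (lvl (qs ! (i - 1))) (lvl (qs ! Suc i))"
    define pre post where "pre = take (i - 1) qs" and "post = drop (Suc (Suc i)) qs"
    define a b c where "a = qs ! (i - 1)" and "b = qs ! i" and "c = qs ! Suc i"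
    have qs: "qs = pre @ [a, b, c] @ post"
      unfolding pre_def post_def a_def b_def c_def using i by (intro nth_window_decomp) auto
    have lvl_ac: "lvl a \<le> lvl b" "lvl c \<le> lvl b"
      using peak unfolding a_def b_def c_def by auto
    have geo: "graph_geodesic E S (pre @ [a, b, c] @ post)"
      using adm unfolding admissible_def qs by blast
    then have abc: "E a b" "E b c" "a \<in> S" "c \<in> S"
      unfolding graph_geodesic_def graph_path_def by (auto simp: successively_append_iff)
    have "a \<noteq> c"
      using graph_geodesic_splice(1)[OF geo, of "[a]"] abc by (auto simp: graph_path_def)
    moreover have "\<not> E a c"
      using graph_geodesic_splice(1)[OF geo, of "[a, c]"] abc by (auto simp: graph_path_def)
    ultimately obtain x where x: "x \<in> S" "E a x" "E x c" "lvl x < lvl b"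
      using detour[OF abc(1,2) lvl_ac] by blast
    have "graph_geodesic E S (pre @ [a, x, c] @ post)"
      using graph_geodesic_splice(2)[OF geo, of "[a, x, c]"] abc x by (simp add: graph_path_def)
    then have "admissible (pre @ [a, x, c] @ post)"
      using adm unfolding admissible_def qs by (cases pre) (simp_all add: last_append)
    moreover have "weight (pre @ [a, x, c] @ post) < weight qs"
      using x lvl_bounded[OF x(1)] unfolding weight_def qs by simp
    ultimately show False
      using least by (simp add: not_le[symmetric])
  qed
  with adm show thesis
    using that unfolding admissible_def by blast
qed

section \<open>The hyperbolic approximation\<close>

lemma HA_path_eq_graph_path: "HA_path Z r V = graph_path (HA_edge Z r V) (HA_verts Z r V)"
  by (auto simp: fun_eq_iff HA_path_def graph_path_def successively_conv_nth)

lemma HA_dist_eq_graph_dist: "HA_dist Z r V = graph_dist (HA_edge Z r V) (HA_verts Z r V)"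
  unfolding HA_dist_def graph_dist_def HA_path_eq_graph_path by (intro ext) (rule refl)

lemma GreatestI_int_bounded:
  fixes P :: "int \<Rightarrow> bool"
  assumes "P k" and bounded: "\<And>j. P j \<Longrightarrow> j \<le> b"
  shows "P (Greatest P)"
proof -
  define M where "M = Max {j. P j \<and> k \<le> j}"
  have fin: "finite {j. P j \<and> k \<le> j}"
    by (rule finite_subset[of _ "{k..b}"]) (auto dest: bounded)
  have "M \<in> {j. P j \<and> k \<le> j}"
    unfolding M_def using fin \<open>P k\<close> by (intro Max_in) auto
  moreover have "j \<le> M" if "P j" for j
  proof (cases "k \<le> j")
    case True
    with that show ?thesis
      using Max_ge[OF fin] unfolding M_def by blast
  next
    case False
    with calculation show ?thesis
      by simp
  qed
  ultimately show ?thesis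
    using Greatest_equality[of P M] by auto
qed

lemma maximal_separated_covers:
  assumes "maximal_separated Z s A" "z \<in> Z" "0 < s"
  shows "\<exists>a\<in>A. dist z a < s"
proof (rule ccontr)
  assume far: "\<not> ?thesis"
  with assms have "separated s (insert z A)" "insert z A \<subseteq> Z"
    unfolding maximal_separated_def separated_def by (auto simp: dist_commute not_less)
  with assms(1) have "z \<in> A"
    unfolding maximal_separated_def by blast
  with far \<open>0 < s\<close> show False by force
qed

lemma separated_subsingleton:
  assumes "separated s A" "A \<subseteq> Z" "bounded Z" "diameter Z < s" "a \<in> A" "b \<in> A"
  shows "a = b"
proof (rule ccontr)
  assume "a \<noteq> b"
  with assms have "s \<le> dist a b"
    unfolding separated_def by blast
  moreover have "dist a b \<le> diameter Z"
    using assms by (intro diameter_bounded_bound) auto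
  ultimately show False
    using \<open>diameter Z < s\<close> by simp
qed

lemma HA_ball_subset:
  assumes "dist (snd u) (snd p) + 2 * r powi fst u \<le> 2 * r powi fst p"
  shows "HA_ball Z r u \<subseteq> HA_ball Z r p"
proof
  fix z assume "z \<in> HA_ball Z r u"
  moreover have "dist z (snd p) \<le> dist z (snd u) + dist (snd u) (snd p)"
    by (rule dist_triangle)
  ultimately show "z \<in> HA_ball Z r p"
    using assms unfolding HA_ball_def by auto
qed

lemma HA_ball_subset_cball: "HA_ball Z r u \<subseteq> HA_cball Z r u"
  using closure_subset[of "HA_ball Z r u"] unfolding HA_cball_def by (auto simp: HA_ball_def)

lemma HA_cball_mono: "HA_ball Z r u \<subseteq> HA_ball Z r p \<Longrightarrow> HA_cball Z r u \<subseteq> HA_cball Z r p"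
  unfolding HA_cball_def using closure_mono by blast

lemma HA_cball_dist:
  assumes "z \<in> HA_cball Z r u"
  shows "dist z (snd u) \<le> 2 * r powi fst u"
proof -
  have "closure (HA_ball Z r u) \<subseteq> cball (snd u) (2 * r powi fst u)"
    by (rule closure_minimal) (auto simp: HA_ball_def dist_commute)
  with assms show ?thesis
    unfolding HA_cball_def by (auto simp: dist_commute)
qed

lemma HA_cball_overlap_dist:
  assumes "HA_cball Z r u \<inter> HA_cball Z r w \<noteq> {}" "fst u = fst w"
  shows "dist (snd u) (snd w) \<le> 4 * r powi fst u"
proof -
  obtain z where "z \<in> HA_cball Z r u" "z \<in> HA_cball Z r w"
    using assms(1) by blast
  then have "dist z (snd u) \<le> 2 * r powi fst u" "dist z (snd w) \<le> 2 * r powi fst u"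
    using HA_cball_dist[of z Z r u] HA_cball_dist[of z Z r w] assms(2) by auto
  moreover have "dist (snd u) (snd w) \<le> dist z (snd u) + dist z (snd w)"
    by (rule dist_triangle3)
  ultimately show ?thesis by linarith
qed

lemma HA_edge_sym: "HA_edge Z r V u w \<Longrightarrow> HA_edge Z r V w u"
  unfolding HA_edge_def by auto

lemma HA_edge_verts: "HA_edge Z r V u w \<Longrightarrow> u \<in> HA_verts Z r V \<and> w \<in> HA_verts Z r V \<and> u \<noteq> w"
  unfolding HA_edge_def by auto

lemma HA_edge_levels:
  "HA_edge Z r V u w \<Longrightarrow> fst u = fst w \<or> fst w = fst u + 1 \<or> fst u = fst w + 1"
  unfolding HA_edge_def by auto

lemma HA_edge_horizontal:
  "HA_edge Z r V u w \<Longrightarrow> fst u = fst w \<Longrightarrow> HA_cball Z r u \<inter> HA_cball Z r w \<noteq> {}"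
  unfolding HA_edge_def by auto

lemma HA_edge_radial:
  "HA_edge Z r V u w \<Longrightarrow> fst w = fst u + 1 \<Longrightarrow> HA_ball Z r w \<subseteq> HA_ball Z r u"
  unfolding HA_edge_def by auto

locale hyperbolic_approximation =
  fixes Z :: "'a::metric_space set" and r :: real and V :: "int \<Rightarrow> 'a set"
  assumes bounded_Z: "bounded Z"
    and two_points: "\<exists>x\<in>Z. \<exists>y\<in>Z. x \<noteq> y"
    and r_pos: "0 < r" and r_le: "r \<le> 1/6"
    and nets: "\<forall>k. HA_k0 Z r \<le> k \<longrightarrow> maximal_separated Z (r powi k) (V k)"
begin

abbreviation "k0 \<equiv> HA_k0 Z r"
abbreviation "verts \<equiv> HA_verts Z r V"
abbreviation "edge \<equiv> HA_edge Z r V"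
abbreviation "hball \<equiv> HA_ball Z r"
abbreviation "hcball \<equiv> HA_cball Z r"

lemma diameter_less_powi_k0: "diameter Z < r powi k0"
proof -
  obtain x y where "x \<in> Z" "y \<in> Z" "x \<noteq> y"
    using two_points by blast
  then have diam_pos: "0 < diameter Z"
    using diameter_bounded_bound[OF bounded_Z] by (metis dist_pos_lt order_less_le_trans)
  obtain n where n: "r ^ n < diameter Z"
    using real_arch_pow_inv[OF diam_pos, of r] r_pos r_le by auto
  obtain m where "diameter Z < (1 / r) ^ m"
    using real_arch_pow[of "1 / r"] r_pos r_le by (auto simp: field_simps)
  then have "diameter Z < r powi (- int m)"
    by (simp add: power_int_minus field_simps)
  moreover have "j \<le> int n" if "diameter Z < r powi j" for j
  proof (rule ccontr)
    assume "\<not> j \<le> int n"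
    then have "r powi j \<le> r powi int n"
      using r_pos r_le by (intro power_int_decreasing) auto
    with n that show False by simp
  qed
  ultimately show ?thesis
    unfolding HA_k0_def by (rule GreatestI_int_bounded)
qed

lemma verts_iff: "v \<in> verts \<longleftrightarrow> k0 \<le> fst v \<and> snd v \<in> V (fst v)"
  by (cases v) (simp add: HA_verts_def)

lemma net_maximal: "k0 \<le> k \<Longrightarrow> maximal_separated Z (r powi k) (V k)"
  using nets by blast

lemma net_subset: "k0 \<le> k \<Longrightarrow> V k \<subseteq> Z"
  using net_maximal by (simp add: maximal_separated_def)

lemma root_unique:
  assumes "a \<in> V k0" "b \<in> V k0"
  shows "a = b"
proof (rule separated_subsingleton)
  show "separated (r powi k0) (V k0)"
    using net_maximal[OF order_refl] by (simp add: maximal_separated_def)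
qed (use assms net_subset bounded_Z diameter_less_powi_k0 in auto)

lemma root_exists: "\<exists>z. z \<in> V k0"
proof -
  obtain x where "x \<in> Z"
    using two_points by blast
  then show ?thesis
    using maximal_separated_covers[OF net_maximal[OF order_refl]] r_pos by auto
qed

lemma center_in_hball:
  assumes "u \<in> verts"
  shows "snd u \<in> hball u"
proof -
  have "snd u \<in> Z"
    using assms net_subset unfolding verts_iff by blast
  with r_pos show ?thesis
    unfolding HA_ball_def by simp
qed

text \<open>This is the only place where \<open>r \<le> 1/6\<close> is used: \<open>r^(k-1) + 4 r^k + 2 r^k \<le> 2 r^(k-1)\<close>.\<close>
lemma ball_subset_parent_ball:
  assumes "fst p = fst u - 1" "dist (snd u) (snd p) < r powi fst p + 4 * r powi fst u"
  shows "hball u \<subseteq> hball p"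
proof (rule HA_ball_subset)
  have "r powi fst u = r * r powi fst p"
    using assms(1) power_int_add_1'[of r "fst p"] r_pos by simp
  moreover have "r * r powi fst p \<le> r powi fst p / 6"
    using mult_right_mono[OF r_le, of "r powi fst p"] r_pos by simp
  ultimately show "dist (snd u) (snd p) + 2 * r powi fst u \<le> 2 * r powi fst p"
    using assms(2) by linarith
qed

lemma parent_edge:
  assumes "u \<in> verts" "p \<in> verts" "fst p = fst u - 1"
    and "dist (snd u) (snd p) < r powi fst p + 4 * r powi fst u"
  shows "edge p u"
  using assms ball_subset_parent_ball[OF assms(3,4)] unfolding HA_edge_def by auto

lemma parent_exists:
  assumes "u \<in> verts" "k0 < fst u"
  obtains p where "p \<in> verts" "fst p = fst u - 1" "dist (snd u) (snd p) < r powi fst p" "edge p u"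
proof -
  have "snd u \<in> Z"
    using assms(1) net_subset unfolding verts_iff by blast
  then obtain a where a: "a \<in> V (fst u - 1)" "dist (snd u) a < r powi (fst u - 1)"
    using maximal_separated_covers[OF net_maximal[of "fst u - 1"]] assms(2) r_pos by auto
  define p where "p = (fst u - 1, a)"
  have "p \<in> verts" "fst p = fst u - 1" "dist (snd u) (snd p) < r powi fst p"
    using a assms(2) unfolding p_def by (auto simp: verts_iff)
  moreover have "edge p u"
    using calculation assms(1) zero_less_power_int[OF r_pos, of "fst u"]
    by (intro parent_edge) auto
  ultimately show thesis
    using that by blast
qed

lemma common_child_edge:
  assumes "edge a b" "edge b c" "fst b = fst a + 1" "fst b = fst c + 1" "a \<noteq> c"
  shows "edge a c"
proof -
  have verts: "a \<in> verts" "b \<in> verts" "c \<in> verts"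
    using HA_edge_verts assms(1,2) by blast+
  then have "snd b \<in> hcball a \<inter> hcball c"
    using HA_edge_radial[OF assms(1,3)] HA_edge_radial[OF HA_edge_sym[OF assms(2)] assms(4)]
      center_in_hball HA_ball_subset_cball by blast
  moreover have "fst a = fst c"
    using assms(3,4) by simp
  ultimately show ?thesis
    using verts assms(5) unfolding HA_edge_def by blast
qed

lemma detour_child_neighbour:
  assumes "edge a b" "edge b c" "fst b = fst a + 1" "fst c = fst b" "\<not> edge a c"
  shows "\<exists>x\<in>verts. edge a x \<and> edge x c \<and> fst x < fst b"
proof -
  have verts: "a \<in> verts" "c \<in> verts"
    using HA_edge_verts assms(1,2) by blast+
  then have "k0 < fst c"
    using assms(3,4) unfolding verts_iff by simp
  then obtain p where p: "p \<in> verts" "fst p = fst c - 1" "dist (snd c) (snd p) < r powi fst p" "edge p c"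
    using parent_exists verts(2) by blast
  have "hcball b \<subseteq> hcball a"
    using HA_cball_mono HA_edge_radial[OF assms(1,3)] by blast
  moreover have "hcball c \<subseteq> hcball p"
    using HA_cball_mono HA_edge_radial[OF p(4)] p(2) by simp
  ultimately have "hcball a \<inter> hcball p \<noteq> {}"
    using HA_edge_horizontal[OF assms(2) assms(4)[symmetric]] by blast
  moreover have "p \<noteq> a"
    using p(4) assms(5) by blast
  ultimately have "edge a p"
    using verts(1) p(1,2) assms(3,4) unfolding HA_edge_def by auto
  with p show ?thesis
    using assms(4) by auto
qed

lemma detour_neighbours:
  assumes "edge a b" "edge b c" "fst a = fst b" "fst c = fst b"
  shows "\<exists>x\<in>verts. edge a x \<and> edge x c \<and> fst x < fst b"
proof -
  have verts: "a \<in> verts" "b \<in> verts" "c \<in> verts" "a \<noteq> b"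
    using HA_edge_verts assms(1,2) by blast+
  have "k0 < fst b"
  proof (rule ccontr)
    assume "\<not> k0 < fst b"
    then have "fst a = k0" "fst b = k0"
      using verts assms(3) unfolding verts_iff by auto
    then have "snd a = snd b"
      using root_unique verts(1,2) unfolding verts_iff by metis
    with \<open>fst a = k0\<close> \<open>fst b = k0\<close> verts(4) show False
      by (simp add: prod_eq_iff)
  qed
  then obtain p where p: "p \<in> verts" "fst p = fst b - 1" "dist (snd b) (snd p) < r powi fst p"
    using parent_exists verts(2) by blast
  have "edge p u" if "u \<in> verts" "fst u = fst b" "dist (snd u) (snd b) \<le> 4 * r powi fst u" for u
  proof (rule parent_edge)
    have "dist (snd u) (snd p) \<le> dist (snd u) (snd b) + dist (snd b) (snd p)"
      by (rule dist_triangle)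
    with that p(3) show "dist (snd u) (snd p) < r powi fst p + 4 * r powi fst u"
      by linarith
  qed (use that p in auto)
  moreover have "dist (snd a) (snd b) \<le> 4 * r powi fst a"
    using HA_cball_overlap_dist HA_edge_horizontal[OF assms(1,3)] assms(3) by blast
  moreover have "dist (snd c) (snd b) \<le> 4 * r powi fst c"
    using HA_cball_overlap_dist HA_edge_horizontal[OF HA_edge_sym[OF assms(2)]] assms(4) by blast
  ultimately have "edge p a" "edge p c"
    using verts assms(3,4) by auto
  with p show ?thesis
    using HA_edge_sym by fastforce
qed

lemma peak_detour:
  assumes "edge a b" "edge b c" "fst a \<le> fst b" "fst c \<le> fst b" "a \<noteq> c" "\<not> edge a c"
  shows "\<exists>x\<in>verts. edge a x \<and> edge x c \<and> fst x < fst b"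
proof -
  have "fst a = fst b \<or> fst b = fst a + 1" "fst c = fst b \<or> fst b = fst c + 1"
    using HA_edge_levels[OF assms(1)] HA_edge_levels[OF assms(2)] assms(3,4) by auto
  then consider
      "fst b = fst a + 1" "fst b = fst c + 1"
    | "fst b = fst a + 1" "fst c = fst b"
    | "fst a = fst b" "fst b = fst c + 1"
    | "fst a = fst b" "fst c = fst b"
    by linarith
  then show ?thesis
  proof cases
    case 1
    with assms show ?thesis
      using common_child_edge by blast
  next
    case 2
    with assms show ?thesis
      by (intro detour_child_neighbour)
  next
    case 3
    have "edge c b" "edge b a" "\<not> edge c a"
      using assms HA_edge_sym by blast+
    then have "\<exists>x\<in>verts. edge c x \<and> edge x a \<and> fst x < fst b"
      using 3 by (intro detour_child_neighbour) auto
    then show ?thesis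
      using HA_edge_sym by blast
  next
    case 4
    with assms show ?thesis
      by (intro detour_neighbours)
  qed
qed

lemma path_from_root:
  assumes "z0 \<in> V k0" "v \<in> verts"
  shows "\<exists>ps. graph_path edge verts ps \<and> hd ps = (k0, z0) \<and> last ps = v"
  using assms(2)
proof (induction "nat (fst v - k0)" arbitrary: v)
  case 0
  then have "fst v = k0"
    unfolding verts_iff by linarith
  then have "v = (k0, z0)"
    using root_unique[OF assms(1)] 0(2) unfolding verts_iff by (simp add: prod_eq_iff)
  then show ?case
    using 0(2) by (intro exI[of _ "[v]"]) (simp add: graph_path_def)
next
  case (Suc n)
  then have "k0 < fst v"
    by linarith
  then obtain p where p: "p \<in> verts" "fst p = fst v - 1" "edge p v"
    using parent_exists Suc(3) by blast
  moreover have "n = nat (fst p - k0)"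
    using Suc(2) p(2) by linarith
  ultimately obtain ps where "graph_path edge verts ps" "hd ps = (k0, z0)" "last ps = p"
    using Suc(1) by blast
  moreover have "graph_path edge verts [p, v]"
    using p Suc(3) by (simp add: graph_path_def)
  ultimately show ?case
    using graph_path_join[of edge verts ps "[p, v]"] by auto
qed

lemma path_between_verts:
  assumes "v \<in> verts" "w \<in> verts"
  obtains ps where "graph_path edge verts ps" "hd ps = v" "last ps = w"
proof -
  obtain z0 where z0: "z0 \<in> V k0"
    using root_exists by blast
  obtain xs ys where xs: "graph_path edge verts xs" "hd xs = (k0, z0)" "last xs = v"
    and ys: "graph_path edge verts ys" "hd ys = (k0, z0)" "last ys = w"
    using path_from_root[OF z0] assms by meson
  have "symp edge"
    using HA_edge_sym by (blast intro: sympI)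
  then have "graph_path edge verts (rev xs)" "hd (rev xs) = v" "last (rev xs) = (k0, z0)"
    using graph_path_rev xs by (auto simp: graph_path_def hd_rev last_rev)
  then show thesis
    using graph_path_join[of edge verts "rev xs" ys] ys that by auto
qed

end

theorem mainTheorem7:
  fixes Z :: "'a::metric_space set" and r :: real and V :: "int \<Rightarrow> 'a set"
  assumes "bounded Z"
    and "\<exists>x\<in>Z. \<exists>y\<in>Z. x \<noteq> y"
    and "0 < r" and "r \<le> 1/6"
    and "\<forall>k. HA_k0 Z r \<le> k \<longrightarrow> maximal_separated Z (r powi k) (V k)"
    and "v \<in> HA_verts Z r V" and "w \<in> HA_verts Z r V"
  shows "\<exists>ps. HA_path Z r V ps \<and> hd ps = v \<and> last ps = w \<and>
           length ps = Suc (HA_dist Z r V v w) \<and>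
           (\<forall>i. 0 < i \<and> Suc i < length ps \<longrightarrow>
              fst (ps ! i) < max (fst (ps ! (i - 1))) (fst (ps ! Suc i)))"
proof -
  interpret hyperbolic_approximation Z r V
    using assms(1-5) by unfold_locales
  obtain ps where "graph_path edge verts ps" "hd ps = v" "last ps = w"
    using path_between_verts assms(6,7) by blast
  then obtain qs where "graph_geodesic edge verts qs" "hd qs = v" "last qs = w" "no_interior_peak fst qs"
    using graph_geodesic_no_interior_peak[of verts k0 fst edge ps] peak_detour
    unfolding verts_iff by blast
  then show ?thesis
    unfolding HA_path_eq_graph_path HA_dist_eq_graph_dist graph_geodesic_def no_interior_peak_def
    by blast
qed

end
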